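(* Let $f_\gamma$, $N$, $D$ be as in the context and fix $\gamma\in\mathbb{R}$ such that $f_\gamma$ is positive definite. For each positive integer $r$ define the form in $(v,w)\in\mathbb{R}^{2N}$ $$p_{\gamma,r}(v,w)=f_\gamma(v^2-w^2)-\tfrac1r\Big(\sum_{i=1}^N(v_i^2-w_i^2)^2\Big)^D+\tfrac{1}{2r}\Big(\sum_{i=1}^N(v_i^4+w_i^4)\Big)^D,$$ let $q_{\gamma,r}(v,w)=p_{\gamma,r}(\sqrt{v_1},\dots,\sqrt{v_N},\sqrt{w_1},\dots,\sqrt{w_N})$ (a form of degree $2D$), and, whenever $\mu_r:=\min_{\|(v,w)\|_2=1}p_{\gamma,r}(v,w)>0$, let $\bar N(r)=D(2D-1)\frac{\|q_{\gamma,r}\|}{\mu_r}-2D$. Then there exists a positive integer $\hat r$ such that for all integers $r\ge\hat r$ we have $\mu_r>0$ and $r^2\ge\bar N(r)$.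
   Context: Let $p,g_1,\dots,g_m$ be real polynomials in $x=(x_1,\dots,x_n)$ and let $S=\{x\in\mathbb{R}^n : g_i(x)\ge 0,\ i=1,\dots,m\}$. Let $d\ge 1$ be the integer such that $2d$ is the smallest even integer larger than or equal to the maximum of the degrees of $p,g_1,\dots,g_m$. Let $R>0$, and let $\eta_1,\dots,\eta_m$, $\beta$ be real numbers (in the paper: $\sum_i x_i^2\le R$, $g_i\le\eta_i$, $-p\le\beta$ on $S$). For a polynomial $q$ in $x$ of degree at most $2d$, $y^{2d}q(x/y)$ denotes its homogenization to a form of degree $2d$ in $(x,y)$. For $\gamma\in\mathbb{R}$ define the form in the variables $z=(x,s,y)=(x_1,\dots,x_n,s_0,\dots,s_{m+1},y)$: $$f_\gamma(x,s,y)=\big(\gamma y^{2d}-y^{2d}p(x/y)-s_0^2y^{2d-2}\big)^2+\sum_{i=1}^m\big(y^{2d}g_i(x/y)-s_i^2y^{2d-2}\big)^2+\Big(\big(R+\textstyle\sum_{i=1}^m\eta_i+\beta+\gamma\big)^d y^{2d}-\big(\sum_{i=1}^n x_i^2+\sum_{i=0}^m s_i^2\big)^d-s_{m+1}^{2d}\Big)^2.$$ Set $N=n+m+3$ and $D=2d$, so $f_\gamma$ is a form of degree $2D$ in $N$ variables. $f_\gamma(v^2-w^2)$ denotes $f_\gamma(v_1^2-w_1^2,\dots,v_N^2-w_N^2)$. A form is positive definite if it is positive at every nonzero point. For a form $f$ of degree $k$ in $n'$ variables, write $f(x)=\sum_{|\alpha|=k}b_\alpha c(\alpha)x^\alpha$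 with $c(\alpha)=\frac{k!}{\alpha_1!\cdots\alpha_{n'}!}$; define $\|f\|=\max_{|\alpha|=k}|b_\alpha|$. *)

theory Defs
  imports "HOL-Analysis.Analysis" "HOL-Library.Poly_Mapping"
begin

text \<open>Real multivariate polynomials in variables x_0, x_1, ... are represented as
  finitely supported maps from monomials (exponent vectors) to coefficients.\<close>
type_synonym rpoly = "(nat \<Rightarrow>\<^sub>0 nat) \<Rightarrow>\<^sub>0 real"

definition mdeg :: "(nat \<Rightarrow>\<^sub>0 nat) \<Rightarrow> nat" where
  "mdeg mm = (\<Sum>i\<in>Poly_Mapping.keys mm. Poly_Mapping.lookup mm i)"

definition rpoly_deg :: "rpoly \<Rightarrow> nat" where
  "rpoly_deg P = Max (insert 0 (mdeg ` Poly_Mapping.keys P))"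

definition monom_eval :: "(nat \<Rightarrow>\<^sub>0 nat) \<Rightarrow> (nat \<Rightarrow> real) \<Rightarrow> real" where
  "monom_eval mm x = (\<Prod>i\<in>Poly_Mapping.keys mm. x i ^ Poly_Mapping.lookup mm i)"

text \<open>Homogenization to degree k: the form y^k P(x/y) (for deg P \<le> k).\<close>
definition hom_eval :: "nat \<Rightarrow> rpoly \<Rightarrow> (nat \<Rightarrow> real) \<Rightarrow> real \<Rightarrow> real" where
  "hom_eval k P x y = (\<Sum>mm\<in>Poly_Mapping.keys P. Poly_Mapping.lookup P mm * monom_eval mm x * y ^ (k - mdeg mm))"

text \<open>The form f_gamma in the variables z = (x_1..x_n, s_0..s_{m+1}, y), stored as
  z 0..z(n-1) = x, z(n+i) = s_i, z(n+m+2) = y.  The polynomials g_i are g 1 .. g m.\<close>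
definition f_gamma :: "nat \<Rightarrow> nat \<Rightarrow> rpoly \<Rightarrow> (nat \<Rightarrow> rpoly) \<Rightarrow> real \<Rightarrow> (nat \<Rightarrow> real)
    \<Rightarrow> real \<Rightarrow> nat \<Rightarrow> real \<Rightarrow> (nat \<Rightarrow> real) \<Rightarrow> real" where
  "f_gamma n m p g R eta beta d gamma z =
     (let x = (\<lambda>i. if i < n then z i else 0); s = (\<lambda>i. z (n + i)); y = z (n + m + 2) in
       (gamma * y ^ (2*d) - hom_eval (2*d) p x y - (s 0)\<^sup>2 * y ^ (2*d - 2))\<^sup>2
     + (\<Sum>i=1..m. (hom_eval (2*d) (g i) x y - (s i)\<^sup>2 * y ^ (2*d - 2))\<^sup>2)
     + ((R + (\<Sum>i=1..m. eta i) + beta + gamma) ^ d * y ^ (2*d)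
          - ((\<Sum>i<n. (x i)\<^sup>2) + (\<Sum>i\<le>m. (s i)\<^sup>2)) ^ d - (s (m+1)) ^ (2*d))\<^sup>2)"

definition multi_indices :: "nat \<Rightarrow> nat \<Rightarrow> (nat \<Rightarrow> nat) set" where
  "multi_indices n' k = {\<alpha>. (\<forall>i\<ge>n'. \<alpha> i = 0) \<and> (\<Sum>i<n'. \<alpha> i) = k}"

definition multinom :: "nat \<Rightarrow> nat \<Rightarrow> (nat \<Rightarrow> nat) \<Rightarrow> real" where
  "multinom n' k \<alpha> = fact k / (\<Prod>i<n'. fact (\<alpha> i))"

definition form_coeffs :: "nat \<Rightarrow> nat \<Rightarrow> ((nat \<Rightarrow> real) \<Rightarrow> real) \<Rightarrow> (nat \<Rightarrow> nat) \<Rightarrow> real" where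
  "form_coeffs n' k f = (THE b. (\<forall>\<alpha>. \<alpha> \<notin> multi_indices n' k \<longrightarrow> b \<alpha> = 0) \<and>
      (\<forall>x. f x = (\<Sum>\<alpha>\<in>multi_indices n' k. b \<alpha> * multinom n' k \<alpha> * (\<Prod>i<n'. x i ^ \<alpha> i))))"

definition form_norm :: "nat \<Rightarrow> nat \<Rightarrow> ((nat \<Rightarrow> real) \<Rightarrow> real) \<Rightarrow> real" where
  "form_norm n' k f = Max ((\<lambda>\<alpha>. \<bar>form_coeffs n' k f \<alpha>\<bar>) ` multi_indices n' k)"

text \<open>(v,w) \<in> R^{2N} is stored as u with v_i = u i, w_i = u (N+i), i < N.\<close>
definition p_gr :: "nat \<Rightarrow> nat \<Rightarrow> ((nat \<Rightarrow> real) \<Rightarrow> real) \<Rightarrow> nat \<Rightarrow> (nat \<Rightarrow> real) \<Rightarrow> real" where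
  "p_gr N D f r u = f (\<lambda>i. (u i)\<^sup>2 - (u (N+i))\<^sup>2)
     - 1 / real r * (\<Sum>i<N. ((u i)\<^sup>2 - (u (N+i))\<^sup>2)\<^sup>2) ^ D
     + 1 / (2 * real r) * (\<Sum>i<N. (u i) ^ 4 + (u (N+i)) ^ 4) ^ D"

text \<open>q_{gamma,r}(v,w) = p_{gamma,r}(sqrt v, sqrt w), written as the form obtained by
  substituting v_i for v_i^2 and w_i for w_i^2.\<close>
definition q_gr :: "nat \<Rightarrow> nat \<Rightarrow> ((nat \<Rightarrow> real) \<Rightarrow> real) \<Rightarrow> nat \<Rightarrow> (nat \<Rightarrow> real) \<Rightarrow> real" where
  "q_gr N D f r u = f (\<lambda>i. u i - u (N+i))
     - 1 / real r * (\<Sum>i<N. (u i - u (N+i))\<^sup>2) ^ D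
     + 1 / (2 * real r) * (\<Sum>i<N. (u i)\<^sup>2 + (u (N+i))\<^sup>2) ^ D"

definition mu_r :: "nat \<Rightarrow> nat \<Rightarrow> ((nat \<Rightarrow> real) \<Rightarrow> real) \<Rightarrow> nat \<Rightarrow> real" where
  "mu_r N D f r = Inf {p_gr N D f r u | u. (\<Sum>i<2*N. (u i)\<^sup>2) = 1}"

definition Nbar :: "nat \<Rightarrow> nat \<Rightarrow> ((nat \<Rightarrow> real) \<Rightarrow> real) \<Rightarrow> nat \<Rightarrow> real" where
  "Nbar N D f r = real D * (2 * real D - 1) * form_norm (2*N) (2*D) (q_gr N D f r) / mu_r N D f r
     - 2 * real D"

end

theory Submission
  imports Defs
begin

text \<open>
  \<open>f_gamma\<close> is a form of degree \<open>2D\<close>, so positive definiteness and compactness of the unit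
  sphere give \<open>f_gamma t \<ge> c |t|^(2D)\<close> for some \<open>c > 0\<close>. Once \<open>r \<ge> 1/c\<close> this absorbs the
  negative term of \<open>p_gr\<close>, and what is left on the unit sphere is
  \<open>(1/2r) (\<Sum>i. v\<^sub>i\<^sup>4 + w\<^sub>i\<^sup>4)^D \<ge> \<delta>/r\<close> with \<open>\<delta>\<close> depending only on \<open>N\<close> and \<open>D\<close>; hence
  \<open>mu_r \<ge> \<delta>/r\<close>. The coefficients of \<open>q_gr\<close> are affine in \<open>1/r\<close>, so its norm stays bounded,
  \<open>Nbar r = O(r)\<close>, and this is below \<open>r\<^sup>2\<close> for large \<open>r\<close>. The coefficients of a form are well
  defined because a polynomial function that vanishes identically has only zero coefficients.
\<close>

section \<open>Forms as linear combinations of monomials\<close>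

definition monomial_value :: "nat \<Rightarrow> (nat \<Rightarrow> nat) \<Rightarrow> (nat \<Rightarrow> real) \<Rightarrow> real" where
  "monomial_value n \<alpha> x = (\<Prod>i<n. x i ^ \<alpha> i)"

definition monomial_combination :: "nat \<Rightarrow> (real \<times> (nat \<Rightarrow> nat)) list \<Rightarrow> (nat \<Rightarrow> real) \<Rightarrow> real" where
  "monomial_combination n L x = (\<Sum>(c,\<alpha>)\<leftarrow>L. c * monomial_value n \<alpha> x)"

lemma monomial_combination_Nil [simp]: "monomial_combination n [] x = 0"
  by (simp add: monomial_combination_def)

lemma monomial_combination_Cons [simp]:
  "monomial_combination n ((c, \<alpha>) # L) x = c * monomial_value n \<alpha> x + monomial_combination n L x"
  by (simp add: monomial_combination_def)

lemma monomial_combination_append [simp]: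
  "monomial_combination n (L1 @ L2) x = monomial_combination n L1 x + monomial_combination n L2 x"
  by (simp add: monomial_combination_def)

definition is_form :: "nat \<Rightarrow> nat \<Rightarrow> ((nat \<Rightarrow> real) \<Rightarrow> real) \<Rightarrow> bool" where
  "is_form n k f \<longleftrightarrow> (\<exists>L. snd ` set L \<subseteq> multi_indices n k \<and> f = monomial_combination n L)"

lemma is_formE:
  assumes "is_form n k f"
  obtains L where "snd ` set L \<subseteq> multi_indices n k" "f = monomial_combination n L"
  using assms unfolding is_form_def by blast

lemma is_formI:
  "snd ` set L \<subseteq> multi_indices n k \<Longrightarrow> (\<And>x. f x = monomial_combination n L x) \<Longrightarrow> is_form n k f"
  unfolding is_form_def by blast

lemma is_form_zero: "is_form n k (\<lambda>x. 0)"
  by (rule is_formI[of "[]"]) simp_all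

lemma is_form_add:
  assumes "is_form n k f" "is_form n k g"
  shows "is_form n k (\<lambda>x. f x + g x)"
proof -
  obtain L1 where "snd ` set L1 \<subseteq> multi_indices n k" "f = monomial_combination n L1"
    using assms(1) by (rule is_formE)
  moreover obtain L2 where "snd ` set L2 \<subseteq> multi_indices n k" "g = monomial_combination n L2"
    using assms(2) by (rule is_formE)
  ultimately show ?thesis
    by (intro is_formI[of "L1 @ L2"]) auto
qed

lemma is_form_scale:
  assumes "is_form n k f"
  shows "is_form n k (\<lambda>x. a * f x)"
proof -
  obtain L where L: "snd ` set L \<subseteq> multi_indices n k" "f = monomial_combination n L"
    using assms by (rule is_formE)
  define L' where "L' = map (\<lambda>(c,\<alpha>). (a * c, \<alpha>)) L"
  have "snd ` set L' \<subseteq> multi_indices n k"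
    using L(1) unfolding L'_def by force
  moreover have "a * f x = monomial_combination n L' x" for x
    unfolding L(2) L'_def by (induction L) (auto simp: algebra_simps)
  ultimately show ?thesis
    by (rule is_formI)
qed

lemma is_form_diff:
  assumes "is_form n k f" "is_form n k g"
  shows "is_form n k (\<lambda>x. f x - g x)"
  using is_form_add[OF assms(1) is_form_scale[OF assms(2), of "-1"]] by simp

lemma multi_indices_add:
  "\<alpha> \<in> multi_indices n k \<Longrightarrow> \<beta> \<in> multi_indices n l \<Longrightarrow> (\<lambda>i. \<alpha> i + \<beta> i) \<in> multi_indices n (k + l)"
  unfolding multi_indices_def by (simp add: sum.distrib)

lemma monomial_value_add:
  "monomial_value n (\<lambda>i. \<alpha> i + \<beta> i) x = monomial_value n \<alpha> x * monomial_value n \<beta> x"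
  unfolding monomial_value_def by (simp add: power_add prod.distrib)

lemma is_form_mult:
  assumes "is_form n k f" "is_form n l g"
  shows "is_form n (k + l) (\<lambda>x. f x * g x)"
proof -
  obtain L1 where L1: "snd ` set L1 \<subseteq> multi_indices n k" "f = monomial_combination n L1"
    using assms(1) by (rule is_formE)
  obtain L2 where L2: "snd ` set L2 \<subseteq> multi_indices n l" "g = monomial_combination n L2"
    using assms(2) by (rule is_formE)
  define times where "times = (\<lambda>(c,\<alpha>). map (\<lambda>(c',\<beta>). (c * c', \<lambda>i. \<alpha> i + \<beta> i)) L2)"
  have "snd ` set (concat (map times L1)) \<subseteq> multi_indices n (k + l)"
    using L1(1) L2(1) unfolding times_def by (force intro: multi_indices_add)
  moreover have "f x * g x = monomial_combination n (concat (map times L1)) x" for x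
    unfolding L1(2)
  proof (induction L1)
    case (Cons a L1)
    obtain c \<alpha> where a: "a = (c, \<alpha>)" by fastforce
    have "c * monomial_value n \<alpha> x * g x = monomial_combination n (times a) x"
      unfolding L2(2) a times_def by (induction L2) (auto simp: algebra_simps monomial_value_add)
    then show ?case using Cons a by (simp add: algebra_simps)
  qed simp
  ultimately show ?thesis
    by (rule is_formI)
qed

lemma is_form_const: "is_form n 0 (\<lambda>x. a)"
  by (rule is_formI[of "[(a, \<lambda>i. 0)]"]) (simp_all add: monomial_value_def multi_indices_def)

lemma is_form_var:
  assumes "i < n"
  shows "is_form n 1 (\<lambda>x. x i)"
proof -
  define \<alpha> where "\<alpha> = (\<lambda>j. if j = i then 1 else 0 :: nat)"
  have "\<alpha> \<in> multi_indices n 1"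
    using assms unfolding multi_indices_def \<alpha>_def by auto
  moreover have "monomial_value n \<alpha> x = x i" for x
  proof -
    have "monomial_value n \<alpha> x = (\<Prod>j<n. if j = i then x j else 1)"
      unfolding monomial_value_def \<alpha>_def by (intro prod.cong) auto
    also have "\<dots> = x i"
      using assms by simp
    finally show ?thesis .
  qed
  ultimately show ?thesis
    by (intro is_formI[of "[(1, \<alpha>)]"]) simp_all
qed

lemma is_form_power:
  assumes "is_form n k f"
  shows "is_form n (k * j) (\<lambda>x. f x ^ j)"
proof (induction j)
  case 0
  show ?case using is_form_const[of n 1] by simp
next
  case (Suc j)
  show ?case using is_form_mult[OF assms Suc] by (simp add: algebra_simps)
qed

lemma is_form_sum:
  assumes "finite S" "\<And>s. s \<in> S \<Longrightarrow> is_form n k (F s)"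
  shows "is_form n k (\<lambda>x. \<Sum>s\<in>S. F s x)"
  using assms by (induction S rule: finite_induct) (auto intro: is_form_zero is_form_add)

lemma is_form_prod:
  assumes "finite S" "\<And>s. s \<in> S \<Longrightarrow> is_form n (k s) (F s)"
  shows "is_form n (\<Sum>s\<in>S. k s) (\<lambda>x. \<Prod>s\<in>S. F s x)"
  using assms by (induction S rule: finite_induct) (auto intro: is_form_const is_form_mult)

lemma is_form_monomial_subst:
  assumes "\<alpha> \<in> multi_indices n k" "\<And>i. i < n \<Longrightarrow> is_form m 1 (L i)"
  shows "is_form m k (\<lambda>u. monomial_value n \<alpha> (\<lambda>i. L i u))"
proof -
  have "is_form m (\<Sum>i<n. \<alpha> i) (\<lambda>u. \<Prod>i<n. L i u ^ \<alpha> i)"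
    using assms(2) by (intro is_form_prod) (use is_form_power in fastforce)+
  then show ?thesis
    using assms(1) unfolding monomial_value_def multi_indices_def by simp
qed

lemma is_form_subst:
  assumes "is_form n k f" "\<And>i. i < n \<Longrightarrow> is_form m 1 (L i)"
  shows "is_form m k (\<lambda>u. f (\<lambda>i. L i u))"
proof -
  obtain Cs where Cs: "snd ` set Cs \<subseteq> multi_indices n k" "f = monomial_combination n Cs"
    using assms(1) by (rule is_formE)
  from Cs(1) have "is_form m k (\<lambda>u. monomial_combination n Cs (\<lambda>i. L i u))"
  proof (induction Cs)
    case (Cons a Cs)
    obtain c \<alpha> where a: "a = (c, \<alpha>)" by fastforce
    have "is_form m k (\<lambda>u. monomial_value n \<alpha> (\<lambda>i. L i u))"
      using Cons.prems a by (intro is_form_monomial_subst assms(2)) auto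
    then show ?case
      using Cons a by (auto intro: is_form_add is_form_scale)
  qed (simp add: is_form_zero)
  then show ?thesis
    unfolding Cs(2) .
qed

lemma mdeg_le_rpoly_deg: "mm \<in> Poly_Mapping.keys P \<Longrightarrow> mdeg mm \<le> rpoly_deg P"
  unfolding rpoly_deg_def by (intro Max_ge) auto

lemma is_form_hom_eval:
  assumes vars: "\<forall>mm\<in>Poly_Mapping.keys P. Poly_Mapping.keys mm \<subseteq> {..<n}"
    and deg: "rpoly_deg P \<le> k"
    and X: "\<And>i. i < n \<Longrightarrow> is_form M 1 (\<lambda>u. X u i)" and Y: "is_form M 1 Y"
  shows "is_form M k (\<lambda>u. hom_eval k P (X u) (Y u))"
  unfolding hom_eval_def
proof (rule is_form_sum)
  fix mm assume mm: "mm \<in> Poly_Mapping.keys P"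
  have "is_form M (\<Sum>i\<in>Poly_Mapping.keys mm. Poly_Mapping.lookup mm i)
      (\<lambda>u. \<Prod>i\<in>Poly_Mapping.keys mm. X u i ^ Poly_Mapping.lookup mm i)"
    using vars mm by (intro is_form_prod) (auto intro: is_form_power[OF X, simplified])
  then have "is_form M (mdeg mm) (\<lambda>u. monom_eval mm (X u))"
    unfolding monom_eval_def mdeg_def .
  from is_form_mult[OF this is_form_power[OF Y, of "k - mdeg mm"]]
  have "is_form M k (\<lambda>u. monom_eval mm (X u) * Y u ^ (k - mdeg mm))"
    using mdeg_le_rpoly_deg[OF mm] deg by simp
  then show "is_form M k (\<lambda>u. Poly_Mapping.lookup P mm * monom_eval mm (X u) * Y u ^ (k - mdeg mm))"
    using is_form_scale[of M k _ "Poly_Mapping.lookup P mm"] by (simp add: mult.assoc)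
qed simp

lemma is_form_square_diff:
  "is_form n k f \<Longrightarrow> is_form n k g \<Longrightarrow> is_form n (2 * k) (\<lambda>x. (f x - g x)\<^sup>2)"
  using is_form_power[OF is_form_diff, of n k f g 2] by (simp add: mult.commute)

lemma is_form_f_gamma:
  assumes vars_p: "\<forall>mm\<in>Poly_Mapping.keys p. Poly_Mapping.keys mm \<subseteq> {..<n}"
    and vars_g: "\<forall>i\<in>{1..m}. \<forall>mm\<in>Poly_Mapping.keys (g i). Poly_Mapping.keys mm \<subseteq> {..<n}"
    and deg_p: "rpoly_deg p \<le> 2 * d" and deg_g: "\<forall>i\<in>{1..m}. rpoly_deg (g i) \<le> 2 * d"
    and "d \<ge> 1"
  shows "is_form (n + m + 3) (2 * (2 * d)) (f_gamma n m p g R eta beta d gamma)"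
proof -
  let ?N = "n + m + 3" and ?y = "\<lambda>z. z (n + m + 2)" and ?x = "\<lambda>z i. if i < n then z i else 0"
  have var: "is_form ?N 1 (\<lambda>z. z i)" if "i < ?N" for i
    using that by (rule is_form_var)
  have y_power: "is_form ?N j (\<lambda>z. ?y z ^ j)" for j
    using is_form_power[OF var, of "n + m + 2" j] by simp
  have slack: "is_form ?N (2 * d) (\<lambda>z. (z (n + i))\<^sup>2 * ?y z ^ (2 * d - 2))" if "i \<le> m + 1" for i
  proof -
    obtain e where e: "d = Suc e"
      using \<open>d \<ge> 1\<close> by (cases d) auto
    have "is_form ?N 2 (\<lambda>z. (z (n + i))\<^sup>2)"
      using is_form_power[OF var, of "n + i" 2] that by simp
    from is_form_mult[OF this y_power[of "2 * e"]]
    have "is_form ?N (2 + 2 * e) (\<lambda>z. (z (n + i))\<^sup>2 * ?y z ^ (2 * e))" .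
    moreover have "2 + 2 * e = 2 * d" "2 * d - 2 = 2 * e"
      using e by simp_all
    ultimately show ?thesis
      by (simp only:)
  qed
  have hom: "is_form ?N (2 * d) (\<lambda>z. hom_eval (2 * d) P (?x z) (?y z))"
    if "\<forall>mm\<in>Poly_Mapping.keys P. Poly_Mapping.keys mm \<subseteq> {..<n}" "rpoly_deg P \<le> 2 * d" for P
  proof (rule is_form_hom_eval[OF that])
    show "is_form ?N 1 (\<lambda>z. ?x z i)" if "i < n" for i
      using var[of i] that by simp
  qed (rule var, simp)
  have objective: "is_form ?N (2 * (2 * d)) (\<lambda>z. (gamma * ?y z ^ (2 * d)
      - hom_eval (2 * d) p (?x z) (?y z) - (z (n + 0))\<^sup>2 * ?y z ^ (2 * d - 2))\<^sup>2)"
    by (intro is_form_square_diff is_form_diff is_form_scale y_power slack hom vars_p deg_p) simp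
  have constraints: "is_form ?N (2 * (2 * d)) (\<lambda>z. \<Sum>i=1..m. (hom_eval (2 * d) (g i) (?x z) (?y z)
      - (z (n + i))\<^sup>2 * ?y z ^ (2 * d - 2))\<^sup>2)"
    using vars_g deg_g by (intro is_form_sum is_form_square_diff hom slack) auto
  have square: "is_form ?N 2 (\<lambda>z. (z i)\<^sup>2)" if "i < ?N" for i
    using is_form_power[OF var[OF that], of 2] by simp
  have radius: "is_form ?N 2 (\<lambda>z. (\<Sum>i<n. (?x z i)\<^sup>2) + (\<Sum>i\<le>m. (z (n + i))\<^sup>2))"
    using square by (intro is_form_add is_form_sum) auto
  have ball: "is_form ?N (2 * (2 * d)) (\<lambda>z. ((R + (\<Sum>i=1..m. eta i) + beta + gamma) ^ d * ?y z ^ (2 * d)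
      - ((\<Sum>i<n. (?x z i)\<^sup>2) + (\<Sum>i\<le>m. (z (n + i))\<^sup>2)) ^ d - (z (n + (m + 1))) ^ (2 * d))\<^sup>2)"
    using is_form_power[OF radius, of d] is_form_power[OF var, of "n + (m + 1)" "2 * d"]
    by (intro is_form_square_diff is_form_diff is_form_scale y_power) simp_all
  show ?thesis
    unfolding f_gamma_def Let_def
    using is_form_add[OF is_form_add[OF objective constraints] ball] by (simp add: add.assoc)
qed

section \<open>Uniqueness of the coefficients of a form\<close>

lemma finite_multi_indices: "finite (multi_indices n k)"
proof -
  have "multi_indices n k \<subseteq> (\<lambda>h i. if i < n then h i else 0) ` PiE {..<n} (\<lambda>_. {..k})"
  proof
    fix \<alpha> assume \<alpha>: "\<alpha> \<in> multi_indices n k"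
    have "\<alpha> i \<le> k" if "i < n" for i
      using \<alpha> member_le_sum[of i "{..<n}" \<alpha>] that unfolding multi_indices_def by simp
    then have "restrict \<alpha> {..<n} \<in> PiE {..<n} (\<lambda>_. {..k})"
      by auto
    moreover have "\<alpha> = (\<lambda>i. if i < n then restrict \<alpha> {..<n} i else 0)"
      using \<alpha> unfolding multi_indices_def by (auto simp: fun_eq_iff)
    ultimately show "\<alpha> \<in> (\<lambda>h i. if i < n then h i else 0) ` PiE {..<n} (\<lambda>_. {..k})"
      by blast
  qed
  then show ?thesis
    by (rule finite_subset) (intro finite_imageI finite_PiE; simp)
qed

lemma multi_indices_nonempty:
  assumes "n > 0"
  shows "multi_indices n k \<noteq> {}"
proof -
  have "(\<lambda>i. if i = 0 then k else 0) \<in> multi_indices n k"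
    using assms unfolding multi_indices_def by auto
  then show ?thesis
    by blast
qed

lemma multinom_pos: "multinom n k \<alpha> > 0"
  unfolding multinom_def by (intro divide_pos_pos prod_pos) auto

lemma monomial_value_fun_upd_last:
  "monomial_value (Suc n) \<alpha> (x(n := t)) = monomial_value n \<alpha> x * t ^ \<alpha> n"
  unfolding monomial_value_def by simp

lemma monomial_value_fun_upd_ignored: "monomial_value n (\<alpha>(n := j)) x = monomial_value n \<alpha> x"
  unfolding monomial_value_def by (intro prod.cong) auto

lemma monomial_sum_slice_eq_0:
  assumes "finite A" and zero: "\<And>x. (\<Sum>\<alpha>\<in>A. e \<alpha> * monomial_value (Suc n) \<alpha> x) = 0"
  shows "(\<Sum>\<alpha>\<in>{\<alpha>\<in>A. \<alpha> n = j}. e \<alpha> * monomial_value n \<alpha> x) = 0"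
proof -
  define J where "J = Max ((\<lambda>\<alpha>. \<alpha> n) ` A)"
  define slice where "slice j = (\<Sum>\<alpha>\<in>{\<alpha>\<in>A. \<alpha> n = j}. e \<alpha> * monomial_value n \<alpha> x)" for j
  have J: "\<alpha> n \<le> J" if "\<alpha> \<in> A" for \<alpha>
    unfolding J_def using that \<open>finite A\<close> by auto
  \<comment> \<open>Collecting by powers of the last variable gives a univariate polynomial that vanishes identically.\<close>
  have "(\<Sum>j\<le>J. slice j * t ^ j) = 0" for t
  proof -
    have "(\<Sum>j\<le>J. slice j * t ^ j) = (\<Sum>j\<le>J. \<Sum>\<alpha>\<in>{\<alpha>\<in>A. \<alpha> n = j}. e \<alpha> * (monomial_value n \<alpha> x * t ^ \<alpha> n))"
      unfolding slice_def by (simp add: sum_distrib_right mult.assoc)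
    also have "\<dots> = (\<Sum>\<alpha>\<in>A. e \<alpha> * (monomial_value n \<alpha> x * t ^ \<alpha> n))"
      by (rule sum.group) (use \<open>finite A\<close> J in auto)
    also have "\<dots> = 0"
      using zero[of "x(n := t)"] by (simp add: monomial_value_fun_upd_last)
    finally show ?thesis .
  qed
  then have "slice j = 0" if "j \<le> J"
    using polyfun_eq_0[of slice J] that by blast
  moreover have "slice j = 0" if "\<not> j \<le> J"
    unfolding slice_def using J that by (intro sum.neutral) force
  ultimately show ?thesis
    unfolding slice_def by blast
qed

lemma monomial_sum_eq_0_imp_coeffs_eq_0:
  assumes "finite A" "\<forall>\<alpha>\<in>A. \<forall>i\<ge>n. \<alpha> i = 0"
    and "\<forall>x. (\<Sum>\<alpha>\<in>A. e \<alpha> * monomial_value n \<alpha> x) = 0"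
  shows "\<forall>\<alpha>\<in>A. e \<alpha> = 0"
  using assms
proof (induction n arbitrary: A e)
  case 0
  have zero: "\<alpha> = (\<lambda>i. 0)" if "\<alpha> \<in> A" for \<alpha>
    using "0.prems"(2) that by (simp add: fun_eq_iff)
  show ?case
  proof
    fix \<alpha> assume "\<alpha> \<in> A"
    with zero have "A = {\<lambda>i. 0}" "\<alpha> = (\<lambda>i. 0)"
      by blast+
    then show "e \<alpha> = 0"
      using "0.prems"(3) by (simp add: monomial_value_def)
  qed
next
  case (Suc n A e)
  show ?case
  proof
    fix \<alpha> assume "\<alpha> \<in> A"
    define j where "j = \<alpha> n"
    define B where "B = {\<beta>\<in>A. \<beta> n = j}"
    have inj: "inj_on (\<lambda>\<beta>. \<beta>(n := 0)) B"
      unfolding B_def by (rule inj_onI) (auto simp: fun_eq_iff, metis)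
    have "\<forall>\<beta>\<in>(\<lambda>\<beta>. \<beta>(n := 0)) ` B. e (\<beta>(n := j)) = 0"
    proof (rule Suc.IH)
      show "finite ((\<lambda>\<beta>. \<beta>(n := 0)) ` B)"
        unfolding B_def using Suc.prems(1) by simp
      show "\<forall>\<beta>\<in>(\<lambda>\<beta>. \<beta>(n := 0)) ` B. \<forall>i\<ge>n. \<beta> i = 0"
        unfolding B_def using Suc.prems(2) by auto
      show "\<forall>x. (\<Sum>\<beta>\<in>(\<lambda>\<beta>. \<beta>(n := 0)) ` B. e (\<beta>(n := j)) * monomial_value n \<beta> x) = 0"
      proof
        fix x
        have "(\<Sum>\<beta>\<in>(\<lambda>\<beta>. \<beta>(n := 0)) ` B. e (\<beta>(n := j)) * monomial_value n \<beta> x)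
            = (\<Sum>\<beta>\<in>B. e (\<beta>(n := 0, n := j)) * monomial_value n (\<beta>(n := 0)) x)"
          by (simp add: sum.reindex[OF inj])
        also have "\<dots> = (\<Sum>\<beta>\<in>B. e \<beta> * monomial_value n \<beta> x)"
          unfolding B_def by (intro sum.cong refl) (auto simp: monomial_value_fun_upd_ignored fun_upd_idem)
        also have "\<dots> = 0"
          unfolding B_def by (rule monomial_sum_slice_eq_0) (use Suc.prems in auto)
        finally show "(\<Sum>\<beta>\<in>(\<lambda>\<beta>. \<beta>(n := 0)) ` B. e (\<beta>(n := j)) * monomial_value n \<beta> x) = 0" .
      qed
    qed
    moreover have "\<alpha>(n := 0) \<in> (\<lambda>\<beta>. \<beta>(n := 0)) ` B"
      unfolding B_def j_def using \<open>\<alpha> \<in> A\<close> by auto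
    ultimately have "e (\<alpha>(n := 0, n := j)) = 0"
      by blast
    then show "e \<alpha> = 0"
      by (simp add: j_def)
  qed
qed

definition has_form_coeffs :: "nat \<Rightarrow> nat \<Rightarrow> ((nat \<Rightarrow> real) \<Rightarrow> real) \<Rightarrow> ((nat \<Rightarrow> nat) \<Rightarrow> real) \<Rightarrow> bool" where
  "has_form_coeffs n k f b \<longleftrightarrow> (\<forall>\<alpha>. \<alpha> \<notin> multi_indices n k \<longrightarrow> b \<alpha> = 0) \<and>
      (\<forall>x. f x = (\<Sum>\<alpha>\<in>multi_indices n k. b \<alpha> * multinom n k \<alpha> * (\<Prod>i<n. x i ^ \<alpha> i)))"

lemma has_form_coeffs_unique:
  assumes "has_form_coeffs n k f b" "has_form_coeffs n k f b'"
  shows "b = b'"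
proof
  fix \<alpha>
  show "b \<alpha> = b' \<alpha>"
  proof (cases "\<alpha> \<in> multi_indices n k")
    case True
    have "(b \<alpha> - b' \<alpha>) * multinom n k \<alpha> = 0"
    proof (rule monomial_sum_eq_0_imp_coeffs_eq_0[OF finite_multi_indices, THEN bspec, OF _ _ True])
      show "\<forall>\<alpha>\<in>multi_indices n k. \<forall>i\<ge>n. \<alpha> i = 0"
        unfolding multi_indices_def by auto
      show "\<forall>x. (\<Sum>\<alpha>\<in>multi_indices n k. (b \<alpha> - b' \<alpha>) * multinom n k \<alpha> * monomial_value n \<alpha> x) = 0"
        using assms unfolding has_form_coeffs_def monomial_value_def
        by (simp add: algebra_simps sum_subtractf)
    qed
    then show ?thesis
      using multinom_pos[of n k \<alpha>] by simp
  next
    case False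
    then show ?thesis
      using assms unfolding has_form_coeffs_def by simp
  qed
qed

lemma form_coeffs_eqI: "has_form_coeffs n k f b \<Longrightarrow> form_coeffs n k f = b"
  unfolding form_coeffs_def using has_form_coeffs_unique
  by (intro the_equality) (auto simp: has_form_coeffs_def)

lemma is_form_has_form_coeffs:
  assumes "is_form n k f"
  obtains b where "has_form_coeffs n k f b"
proof -
  obtain L where L: "snd ` set L \<subseteq> multi_indices n k" "f = monomial_combination n L"
    using assms by (rule is_formE)
  define coeff where "coeff \<alpha> = (\<Sum>(c,\<beta>)\<leftarrow>L. if \<beta> = \<alpha> then c else 0)" for \<alpha>
  define b where "b \<alpha> = (if \<alpha> \<in> multi_indices n k then coeff \<alpha> / multinom n k \<alpha> else 0)" for \<alpha>
  have collect: "(\<Sum>\<alpha>\<in>multi_indices n k. coeff \<alpha> * monomial_value n \<alpha> x) = monomial_combination n L x" for x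
    using L(1) unfolding coeff_def
  proof (induction L)
    case (Cons a L)
    obtain c \<beta> where a: "a = (c, \<beta>)" by fastforce
    have "(\<Sum>\<alpha>\<in>multi_indices n k. (\<Sum>(c,\<beta>)\<leftarrow>a # L. if \<beta> = \<alpha> then c else 0) * monomial_value n \<alpha> x)
       = (\<Sum>\<alpha>\<in>multi_indices n k. if \<beta> = \<alpha> then c * monomial_value n \<alpha> x else 0) +
         (\<Sum>\<alpha>\<in>multi_indices n k. (\<Sum>(c,\<beta>)\<leftarrow>L. if \<beta> = \<alpha> then c else 0) * monomial_value n \<alpha> x)"
      by (auto simp: a distrib_right sum.distrib intro!: sum.cong)
    then show ?case
      using Cons a by (simp add: finite_multi_indices)
  qed simp
  have "has_form_coeffs n k f b"
    unfolding has_form_coeffs_def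
  proof (intro conjI allI impI)
    show "b \<alpha> = 0" if "\<alpha> \<notin> multi_indices n k" for \<alpha>
      using that by (simp add: b_def)
    have "b \<alpha> * multinom n k \<alpha> * (\<Prod>i<n. x i ^ \<alpha> i) = coeff \<alpha> * monomial_value n \<alpha> x"
      if "\<alpha> \<in> multi_indices n k" for \<alpha> x
      using that multinom_pos[of n k \<alpha>] by (simp add: b_def monomial_value_def)
    then show "f x = (\<Sum>\<alpha>\<in>multi_indices n k. b \<alpha> * multinom n k \<alpha> * (\<Prod>i<n. x i ^ \<alpha> i))" for x
      using collect[of x] L(2) by simp
  qed
  then show ?thesis
    by (rule that)
qed

lemma is_form_eq_on_vars:
  assumes "is_form n k f" "\<And>i. i < n \<Longrightarrow> x i = y i"
  shows "f x = f y"
proof -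
  obtain b where "has_form_coeffs n k f b"
    using assms(1) by (rule is_form_has_form_coeffs)
  then show ?thesis
    using assms(2) unfolding has_form_coeffs_def by simp
qed

lemma is_form_homogeneous:
  assumes "is_form n k f"
  shows "f (\<lambda>i. s * x i) = s ^ k * f x"
proof -
  obtain b where b: "has_form_coeffs n k f b"
    using assms by (rule is_form_has_form_coeffs)
  have "(\<Prod>i<n. (s * x i) ^ \<alpha> i) = s ^ (\<Sum>i<n. \<alpha> i) * (\<Prod>i<n. x i ^ \<alpha> i)" for \<alpha>
    by (simp add: power_mult_distrib prod.distrib power_sum)
  then have "(\<Prod>i<n. (s * x i) ^ \<alpha> i) = s ^ k * (\<Prod>i<n. x i ^ \<alpha> i)" if "\<alpha> \<in> multi_indices n k" for \<alpha>
    using that unfolding multi_indices_def by simp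
  then show ?thesis
    using b unfolding has_form_coeffs_def by (simp add: sum_distrib_left algebra_simps)
qed

lemma is_form_continuous:
  assumes "is_form n k f"
  shows "continuous_on UNIV f"
proof -
  obtain b where "has_form_coeffs n k f b"
    using assms by (rule is_form_has_form_coeffs)
  then have f: "f = (\<lambda>x. \<Sum>\<alpha>\<in>multi_indices n k. b \<alpha> * multinom n k \<alpha> * (\<Prod>i<n. x i ^ \<alpha> i))"
    unfolding has_form_coeffs_def by auto
  show ?thesis
    unfolding f by (intro continuous_intros continuous_on_product_coordinates)
qed

section \<open>Positive definite forms are coercive\<close>

definition coordinate_sphere :: "nat \<Rightarrow> (nat \<Rightarrow> real) set" where
  "coordinate_sphere n = {z. (\<forall>i\<ge>n. z i = 0) \<and> (\<Sum>i<n. (z i)\<^sup>2) = 1}"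

lemma compact_coordinate_sphere: "compact (coordinate_sphere n)"
proof -
  let ?box = "PiE UNIV (\<lambda>i. if i < n then {-1..1 :: real} else {0})"
  have "compactin (product_topology (\<lambda>i. euclidean) UNIV) ?box"
    by (subst compactin_PiE) auto
  then have "compact ?box"
    by (simp add: euclidean_product_topology)
  moreover have "closed {z :: nat \<Rightarrow> real. (\<Sum>i<n. (z i)\<^sup>2) = 1}"
    by (intro closed_Collect_eq continuous_intros continuous_on_product_coordinates)
  moreover have "coordinate_sphere n = ?box \<inter> {z. (\<Sum>i<n. (z i)\<^sup>2) = 1}"
  proof (intro equalityI subsetI)
    fix z assume z: "z \<in> coordinate_sphere n"
    have "(z i)\<^sup>2 \<le> 1" if "i < n" for i
      using z member_le_sum[of i "{..<n}" "\<lambda>i. (z i)\<^sup>2"] that by (simp add: coordinate_sphere_def)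
    then have "\<bar>z i\<bar> \<le> 1" if "i < n" for i
      using that abs_square_le_1 by blast
    with z show "z \<in> ?box \<inter> {z. (\<Sum>i<n. (z i)\<^sup>2) = 1}"
      by (auto simp: abs_le_iff coordinate_sphere_def)
  next
    fix z assume z: "z \<in> ?box \<inter> {z. (\<Sum>i<n. (z i)\<^sup>2) = 1}"
    then have range: "z i \<in> (if i < n then {-1..1} else {0})" for i
      by (auto simp: PiE_iff)
    have "z i = 0" if "i \<ge> n" for i
      using range[of i] that by simp
    with z show "z \<in> coordinate_sphere n"
      by (simp add: coordinate_sphere_def)
  qed
  ultimately show ?thesis
    by (simp add: compact_Int_closed)
qed

lemma is_form_ge_sphere_min:
  assumes form: "is_form n (2 * e) f" and "e > 0"
    and min: "\<And>z. z \<in> coordinate_sphere n \<Longrightarrow> f z \<ge> c"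
  shows "f t \<ge> c * (\<Sum>i<n. (t i)\<^sup>2) ^ e"
proof (cases "(\<Sum>i<n. (t i)\<^sup>2) = 0")
  case True
  then have "f t = f (\<lambda>i. 0 * t i)"
    by (intro is_form_eq_on_vars[OF form]) (simp add: sum_nonneg_eq_0_iff)
  also have "\<dots> = 0"
    using is_form_homogeneous[OF form, of 0 t] \<open>e > 0\<close> by simp
  finally show ?thesis
    using True \<open>e > 0\<close> by (simp add: zero_power)
next
  case False
  define S where "S = (\<Sum>i<n. (t i)\<^sup>2)"
  have "S > 0"
    using False unfolding S_def by (simp add: order_neq_le_trans sum_nonneg)
  define z where "z = (\<lambda>i. if i < n then t i / sqrt S else 0)"
  have "(\<Sum>i<n. (z i)\<^sup>2) = (\<Sum>i<n. (t i)\<^sup>2) / S"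
    using \<open>S > 0\<close> unfolding z_def by (simp add: power_divide sum_divide_distrib)
  then have "z \<in> coordinate_sphere n"
    using \<open>S > 0\<close> unfolding coordinate_sphere_def S_def by (simp add: z_def)
  have "f t = f (\<lambda>i. sqrt S * z i)"
    using \<open>S > 0\<close> by (intro is_form_eq_on_vars[OF form]) (simp add: z_def)
  also have "\<dots> = S ^ e * f z"
    using \<open>S > 0\<close> by (simp add: is_form_homogeneous[OF form] power_mult)
  finally show ?thesis
    using min[OF \<open>z \<in> coordinate_sphere n\<close>] \<open>S > 0\<close> unfolding S_def[symmetric] by (simp add: mult.commute)
qed

lemma is_form_coercive:
  assumes form: "is_form n (2 * e) f" and "n > 0" "e > 0"
    and posdef: "\<forall>z. (\<exists>i<n. z i \<noteq> 0) \<longrightarrow> f z > 0"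
  shows "\<exists>c>0. \<forall>t. f t \<ge> c * (\<Sum>i<n. (t i)\<^sup>2) ^ e"
proof -
  have "(\<Sum>i<n. (if i = 0 then 1 else 0 :: real)\<^sup>2) = (\<Sum>i<n. if i = 0 then 1 else 0)"
    by (intro sum.cong) auto
  then have "(\<lambda>i. if i = 0 then 1 else 0) \<in> coordinate_sphere n"
    using \<open>n > 0\<close> unfolding coordinate_sphere_def by simp
  then obtain z0 where z0: "z0 \<in> coordinate_sphere n" "\<And>z. z \<in> coordinate_sphere n \<Longrightarrow> f z0 \<le> f z"
    using continuous_attains_inf[OF compact_coordinate_sphere _
        continuous_on_subset[OF is_form_continuous[OF form]]] by blast
  have "\<exists>i<n. z0 i \<noteq> 0"
  proof (rule ccontr)
    assume "\<not> (\<exists>i<n. z0 i \<noteq> 0)"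
    then have "(\<Sum>i<n. (z0 i)\<^sup>2) = 0"
      by simp
    then show False
      using z0(1) unfolding coordinate_sphere_def by simp
  qed
  then have "f z0 > 0"
    using posdef by blast
  with is_form_ge_sphere_min[OF form \<open>e > 0\<close> z0(2)] show ?thesis
    by blast
qed

section \<open>Bounds for \<open>mu_r\<close> and for the norm of \<open>q_gr\<close>\<close>

lemma q_gr_has_form_coeffs:
  assumes "is_form N (2 * D) F"
  obtains b0 b1 b2 where
    "\<And>r. has_form_coeffs (2 * N) (2 * D) (q_gr N D F r)
       (\<lambda>\<alpha>. b0 \<alpha> - 1 / real r * b1 \<alpha> + 1 / (2 * real r) * b2 \<alpha>)"
proof -
  have var: "is_form (2 * N) 1 (\<lambda>u. u i)" if "i < 2 * N" for i
    using that by (rule is_form_var)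
  have diff: "is_form (2 * N) 1 (\<lambda>u. u i - u (N + i))" if "i < N" for i
    using that by (intro is_form_diff var) auto
  have "is_form (2 * N) (2 * D) (\<lambda>u. F (\<lambda>i. u i - u (N + i)))"
    using assms diff by (rule is_form_subst)
  moreover have "is_form (2 * N) (2 * D) (\<lambda>u. (\<Sum>i<N. (u i - u (N + i))\<^sup>2) ^ D)"
  proof -
    have "is_form (2 * N) 2 (\<lambda>u. \<Sum>i<N. (u i - u (N + i))\<^sup>2)"
      using is_form_power[OF diff, of _ 2] by (intro is_form_sum) auto
    then show ?thesis
      using is_form_power[of "2 * N" 2 _ D] by simp
  qed
  moreover have "is_form (2 * N) (2 * D) (\<lambda>u. (\<Sum>i<N. (u i)\<^sup>2 + (u (N + i))\<^sup>2) ^ D)"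
  proof -
    have "is_form (2 * N) 2 (\<lambda>u. (u i)\<^sup>2 + (u (N + i))\<^sup>2)" if "i < N" for i
      using that is_form_power[OF var, of _ 2] by (intro is_form_add) auto
    then have "is_form (2 * N) 2 (\<lambda>u. \<Sum>i<N. (u i)\<^sup>2 + (u (N + i))\<^sup>2)"
      by (intro is_form_sum) auto
    then show ?thesis
      using is_form_power[of "2 * N" 2 _ D] by simp
  qed
  ultimately obtain b0 b1 b2 where b:
    "has_form_coeffs (2 * N) (2 * D) (\<lambda>u. F (\<lambda>i. u i - u (N + i))) b0"
    "has_form_coeffs (2 * N) (2 * D) (\<lambda>u. (\<Sum>i<N. (u i - u (N + i))\<^sup>2) ^ D) b1"
    "has_form_coeffs (2 * N) (2 * D) (\<lambda>u. (\<Sum>i<N. (u i)\<^sup>2 + (u (N + i))\<^sup>2) ^ D) b2"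
    by (meson is_form_has_form_coeffs)
  then have "has_form_coeffs (2 * N) (2 * D) (q_gr N D F r)
      (\<lambda>\<alpha>. b0 \<alpha> - 1 / real r * b1 \<alpha> + 1 / (2 * real r) * b2 \<alpha>)" for r
    using b unfolding has_form_coeffs_def q_gr_def
    by (simp add: algebra_simps sum.distrib sum_subtractf sum_distrib_left)
  then show ?thesis
    by (rule that)
qed

lemma form_norm_q_gr_bounded:
  assumes "is_form N (2 * D) F" "N > 0"
  obtains K where "K \<ge> 0" "\<And>r. r \<ge> 1 \<Longrightarrow> form_norm (2 * N) (2 * D) (q_gr N D F r) \<le> K"
proof -
  obtain b0 b1 b2 where b: "\<And>r. has_form_coeffs (2 * N) (2 * D) (q_gr N D F r)
      (\<lambda>\<alpha>. b0 \<alpha> - 1 / real r * b1 \<alpha> + 1 / (2 * real r) * b2 \<alpha>)"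
    using q_gr_has_form_coeffs[OF assms(1)] by blast
  define I where "I = multi_indices (2 * N) (2 * D)"
  define K where "K = (\<Sum>\<alpha>\<in>I. \<bar>b0 \<alpha>\<bar> + \<bar>b1 \<alpha>\<bar> + \<bar>b2 \<alpha>\<bar>)"
  have "form_norm (2 * N) (2 * D) (q_gr N D F r) \<le> K" if "r \<ge> 1" for r
  proof -
    have "\<bar>b0 \<alpha> - 1 / real r * b1 \<alpha> + 1 / (2 * real r) * b2 \<alpha>\<bar> \<le> K" if "\<alpha> \<in> I" for \<alpha>
    proof -
      have shrink: "\<bar>s * b\<bar> \<le> \<bar>b\<bar>" if "0 \<le> s" "s \<le> 1" for s b :: real
        using that by (simp add: abs_mult mult_left_le_one_le)
      have "\<bar>1 / (2 * real r) * b2 \<alpha>\<bar> \<le> \<bar>b2 \<alpha>\<bar>" "\<bar>1 / real r * b1 \<alpha>\<bar> \<le> \<bar>b1 \<alpha>\<bar>"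
        using \<open>r \<ge> 1\<close> by (intro shrink; simp)+
      moreover have "\<bar>b0 \<alpha>\<bar> + \<bar>b1 \<alpha>\<bar> + \<bar>b2 \<alpha>\<bar> \<le> K"
        unfolding K_def I_def using that I_def finite_multi_indices
        by (intro member_le_sum) auto
      moreover have "\<bar>b0 \<alpha> - 1 / real r * b1 \<alpha> + 1 / (2 * real r) * b2 \<alpha>\<bar>
          \<le> \<bar>b0 \<alpha>\<bar> + \<bar>1 / real r * b1 \<alpha>\<bar> + \<bar>1 / (2 * real r) * b2 \<alpha>\<bar>"
        by linarith
      ultimately show ?thesis
        by linarith
    qed
    then show ?thesis
      unfolding form_norm_def form_coeffs_eqI[OF b] I_def[symmetric]
      using finite_multi_indices multi_indices_nonempty \<open>N > 0\<close>
      by (intro Max.boundedI) (auto simp: I_def)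
  qed
  moreover have "K \<ge> 0"
    unfolding K_def by (intro sum_nonneg) auto
  ultimately show ?thesis
    using that by blast
qed

lemma exists_square_ge_inverse_card:
  fixes u :: "nat \<Rightarrow> real"
  assumes "M > 0" "(\<Sum>i<M. (u i)\<^sup>2) = 1"
  shows "\<exists>j<M. (u j)\<^sup>2 \<ge> 1 / real M"
proof (rule ccontr)
  assume "\<not> ?thesis"
  then have "(\<Sum>i<M. (u i)\<^sup>2) < (\<Sum>i<M. 1 / real M)"
    using assms(1) by (intro sum_strict_mono) auto
  with assms show False
    by simp
qed

lemma sum_fourth_powers_lower_bound:
  fixes u :: "nat \<Rightarrow> real"
  assumes "N > 0" "(\<Sum>i<2 * N. (u i)\<^sup>2) = 1"
  shows "(\<Sum>i<N. u i ^ 4 + u (N + i) ^ 4) \<ge> (1 / real (2 * N))\<^sup>2"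
proof -
  obtain j where j: "j < 2 * N" "(u j)\<^sup>2 \<ge> 1 / real (2 * N)"
    using exists_square_ge_inverse_card[OF _ assms(2)] assms(1) by auto
  have "(1 / real (2 * N))\<^sup>2 \<le> ((u j)\<^sup>2)\<^sup>2"
    by (rule power_mono[OF j(2)]) simp
  also have "\<dots> = u j ^ 4"
    by simp
  also have "\<dots> \<le> (\<Sum>i<N. u i ^ 4 + u (N + i) ^ 4)"
  proof -
    obtain i where "i < N" "j = i \<or> j = N + i"
    proof (cases "j < N")
      case False
      then show ?thesis
        using j(1) that[of "j - N"] by simp
    qed (use that in blast)
    then have "u j ^ 4 \<le> u i ^ 4 + u (N + i) ^ 4"
      by auto
    also have "\<dots> \<le> (\<Sum>i<N. u i ^ 4 + u (N + i) ^ 4)"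
      using \<open>i < N\<close> by (intro member_le_sum) auto
    finally show ?thesis .
  qed
  finally show ?thesis .
qed

lemma p_gr_lower_bound:
  assumes "N > 0" "c > 0" and coercive: "\<forall>t. F t \<ge> c * (\<Sum>i<N. (t i)\<^sup>2) ^ D"
    and "r > 0" "real r \<ge> 1 / c" and unit: "(\<Sum>i<2 * N. (u i)\<^sup>2) = 1"
  shows "p_gr N D F r u \<ge> ((1 / real (2 * N))\<^sup>2) ^ D / (2 * real r)"
proof -
  define T where "T = (\<Sum>i<N. ((u i)\<^sup>2 - (u (N + i))\<^sup>2)\<^sup>2)"
  define W where "W = (\<Sum>i<N. u i ^ 4 + u (N + i) ^ 4)"
  \<comment> \<open>Once \<open>1/r \<le> c\<close>, coercivity of \<open>F\<close> absorbs the negative term of \<open>p_gr\<close>.\<close>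
  have "1 \<le> real r * c"
    using assms(2,5) by (simp add: divide_le_eq)
  then have "1 / real r \<le> c"
    using \<open>r > 0\<close> by (simp add: divide_le_eq mult.commute)
  moreover have "T ^ D \<ge> 0"
    unfolding T_def by (simp add: sum_nonneg)
  ultimately have "1 / real r * T ^ D \<le> c * T ^ D"
    by (rule mult_right_mono)
  also have "\<dots> \<le> F (\<lambda>i. (u i)\<^sup>2 - (u (N + i))\<^sup>2)"
    using coercive unfolding T_def by simp
  finally have "1 / real r * T ^ D \<le> F (\<lambda>i. (u i)\<^sup>2 - (u (N + i))\<^sup>2)" .
  moreover have "((1 / real (2 * N))\<^sup>2) ^ D \<le> W ^ D"
    using sum_fourth_powers_lower_bound[OF \<open>N > 0\<close> unit] unfolding W_def
    by (intro power_mono) auto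
  then have "((1 / real (2 * N))\<^sup>2) ^ D / (2 * real r) \<le> 1 / (2 * real r) * W ^ D"
    using \<open>r > 0\<close> by (simp add: divide_right_mono)
  moreover have "p_gr N D F r u = F (\<lambda>i. (u i)\<^sup>2 - (u (N + i))\<^sup>2) - 1 / real r * T ^ D + 1 / (2 * real r) * W ^ D"
    unfolding p_gr_def T_def W_def by simp
  ultimately show ?thesis
    by linarith
qed

lemma mu_r_lower_bound:
  assumes "N > 0" "c > 0" "\<forall>t. F t \<ge> c * (\<Sum>i<N. (t i)\<^sup>2) ^ D" "r > 0" "real r \<ge> 1 / c"
  shows "mu_r N D F r \<ge> ((1 / real (2 * N))\<^sup>2) ^ D / (2 * real r)"
  unfolding mu_r_def
proof (rule cInf_greatest)
  have "(\<Sum>i<2 * N. (if i = 0 then 1 else 0 :: real)\<^sup>2) = (\<Sum>i<2 * N. if i = 0 then 1 else 0)"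
    by (intro sum.cong) auto
  then have "(\<Sum>i<2 * N. (if i = 0 then 1 else 0 :: real)\<^sup>2) = 1"
    using \<open>N > 0\<close> by simp
  then show "{p_gr N D F r u |u. (\<Sum>i<2 * N. (u i)\<^sup>2) = 1} \<noteq> {}"
    by (intro ex_in_conv[THEN iffD1] exI[of _ "p_gr N D F r (\<lambda>i. if i = 0 then 1 else 0)"]) blast
next
  fix x assume "x \<in> {p_gr N D F r u |u. (\<Sum>i<2 * N. (u i)\<^sup>2) = 1}"
  then obtain u where "x = p_gr N D F r u" "(\<Sum>i<2 * N. (u i)\<^sup>2) = 1"
    by blast
  then show "((1 / real (2 * N))\<^sup>2) ^ D / (2 * real r) \<le> x"
    using p_gr_lower_bound[OF assms] by simp
qed

lemma Nbar_le_linear: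
  assumes mu: "mu_r N D F r \<ge> \<delta> / (2 * real r)" and "\<delta> > 0" "r > 0"
    and norm: "form_norm (2 * N) (2 * D) (q_gr N D F r) \<le> K" and "K \<ge> 0"
  shows "mu_r N D F r > 0" "Nbar N D F r \<le> real r * (real D * (2 * real D - 1) * (2 * K / \<delta>))"
proof -
  have "\<delta> / (2 * real r) > 0"
    using \<open>\<delta> > 0\<close> \<open>r > 0\<close> by simp
  with mu show "mu_r N D F r > 0"
    by linarith
  have "form_norm (2 * N) (2 * D) (q_gr N D F r) / mu_r N D F r \<le> K / mu_r N D F r"
    using norm \<open>mu_r N D F r > 0\<close> by (simp add: divide_right_mono)
  also have "\<dots> \<le> K / (\<delta> / (2 * real r))"
    using \<open>mu_r N D F r > 0\<close> \<open>\<delta> / (2 * real r) > 0\<close> by (intro divide_left_mono mu \<open>K \<ge> 0\<close> mult_pos_pos)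
  also have "\<dots> = real r * (2 * K / \<delta>)"
    using \<open>\<delta> > 0\<close> \<open>r > 0\<close> by (simp add: field_simps)
  finally have ratio: "form_norm (2 * N) (2 * D) (q_gr N D F r) / mu_r N D F r \<le> real r * (2 * K / \<delta>)" .
  have "real D * (2 * real D - 1) \<ge> 0"
    by (cases "D = 0") auto
  have "Nbar N D F r \<le> real D * (2 * real D - 1) * (form_norm (2 * N) (2 * D) (q_gr N D F r) / mu_r N D F r)"
    unfolding Nbar_def by simp
  also have "\<dots> \<le> real D * (2 * real D - 1) * (real r * (2 * K / \<delta>))"
    by (rule mult_left_mono[OF ratio \<open>real D * (2 * real D - 1) \<ge> 0\<close>])
  finally show "Nbar N D F r \<le> real r * (real D * (2 * real D - 1) * (2 * K / \<delta>))"
    by (simp add: algebra_simps)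
qed

lemma eventually_mu_r_pos_Nbar_le_square:
  assumes form: "is_form N (2 * D) F" and "N > 0"
    and "\<exists>c>0. \<forall>t. F t \<ge> c * (\<Sum>i<N. (t i)\<^sup>2) ^ D"
  shows "\<exists>rhat::nat. rhat > 0 \<and> (\<forall>r\<ge>rhat. mu_r N D F r > 0 \<and> real r ^ 2 \<ge> Nbar N D F r)"
proof -
  obtain c where "c > 0" and coercive: "\<forall>t. F t \<ge> c * (\<Sum>i<N. (t i)\<^sup>2) ^ D"
    using assms(3) by blast
  obtain K where "K \<ge> 0" and norm: "\<And>r. r \<ge> 1 \<Longrightarrow> form_norm (2 * N) (2 * D) (q_gr N D F r) \<le> K"
    using form_norm_q_gr_bounded[OF form \<open>N > 0\<close>] by blast
  define \<delta> where "\<delta> = ((1 / real (2 * N))\<^sup>2) ^ D"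
  have "\<delta> > 0"
    unfolding \<delta>_def using \<open>N > 0\<close> by simp
  define A where "A = real D * (2 * real D - 1) * (2 * K / \<delta>)"
  define rhat where "rhat = max 1 (max (nat \<lceil>1 / c\<rceil>) (nat \<lceil>A\<rceil>))"
  have "mu_r N D F r > 0 \<and> real r ^ 2 \<ge> Nbar N D F r" if "r \<ge> rhat" for r
  proof -
    have "r \<ge> 1" "nat \<lceil>1 / c\<rceil> \<le> r" "nat \<lceil>A\<rceil> \<le> r"
      using that unfolding rhat_def by simp_all
    have "real r \<ge> 1 / c"
      using \<open>nat \<lceil>1 / c\<rceil> \<le> r\<close> by linarith
    have "real r \<ge> A"
      using \<open>nat \<lceil>A\<rceil> \<le> r\<close> by linarith
    have "mu_r N D F r \<ge> \<delta> / (2 * real r)"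
      unfolding \<delta>_def using mu_r_lower_bound[OF \<open>N > 0\<close> \<open>c > 0\<close> coercive] \<open>r \<ge> 1\<close> \<open>real r \<ge> 1 / c\<close>
      by simp
    from Nbar_le_linear[OF this \<open>\<delta> > 0\<close> _ norm[OF \<open>r \<ge> 1\<close>] \<open>K \<ge> 0\<close>] \<open>r \<ge> 1\<close>
    have "mu_r N D F r > 0" "Nbar N D F r \<le> real r * A"
      unfolding A_def by simp_all
    moreover have "real r * A \<le> real r ^ 2"
      using \<open>real r \<ge> A\<close> by (simp add: power2_eq_square mult_left_mono)
    ultimately show ?thesis
      by simp
  qed
  moreover have "rhat > 0"
    unfolding rhat_def by simp
  ultimately show ?thesis
    by blast
qed

theorem lemma4p3:
  fixes n m d :: nat and p :: rpoly and g :: "nat \<Rightarrow> rpoly"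
    and R beta gamma :: real and eta :: "nat \<Rightarrow> real"
  assumes vars_p: "\<forall>mm\<in>Poly_Mapping.keys p. Poly_Mapping.keys mm \<subseteq> {..<n}"
    and vars_g: "\<forall>i\<in>{1..m}. \<forall>mm\<in>Poly_Mapping.keys (g i). Poly_Mapping.keys mm \<subseteq> {..<n}"
    and d_def: "d = max 1 ((Max (insert (rpoly_deg p) (rpoly_deg ` g ` {1..m})) + 1) div 2)"
    and R_pos: "R > 0"
    and posdef: "\<forall>z. (\<exists>i < n + m + 3. z i \<noteq> 0) \<longrightarrow> f_gamma n m p g R eta beta d gamma z > 0"
  shows "\<exists>rhat::nat. rhat > 0 \<and> (\<forall>r\<ge>rhat.
           mu_r (n + m + 3) (2*d) (f_gamma n m p g R eta beta d gamma) r > 0 \<and>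
           real r ^ 2 \<ge> Nbar (n + m + 3) (2*d) (f_gamma n m p g R eta beta d gamma) r)"
proof -
  have "Max (insert (rpoly_deg p) (rpoly_deg ` g ` {1..m})) \<le> 2 * d" "d \<ge> 1"
    using d_def by linarith+
  then have form: "is_form (n + m + 3) (2 * (2 * d)) (f_gamma n m p g R eta beta d gamma)"
    using is_form_f_gamma[OF vars_p vars_g] by simp
  show ?thesis
    using eventually_mu_r_pos_Nbar_le_square[OF form _ is_form_coercive[OF form _ _ posdef]] \<open>d \<ge> 1\<close>
    by simp
qed

end
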